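(* Let $p_0(x)=1/\sqrt\pi$, $p_n(\cos\theta)=\sqrt{2/\pi}\cos(n\theta)$ ($n\ge1$) be the orthonormal Chebyshev polynomials of the first kind. For $n\in\mathbb{N}$ and $x\in(-1,1)$ let $\lambda_n(x)=\big(\sum_{i=0}^{n-1}p_i^2(x)\big)^{-1}$, $\Psi_{n,j}(x)=\lambda_n(x)p_{j-1}^2(x)$ ($j=1,\dots,n$), $\mathcal S(\bm\Psi_n(x))=-\sum_{j=1}^n\Psi_{n,j}(x)\log\Psi_{n,j}(x)$, and $\mathcal D_\infty(x)=\lim_{n\to\infty}\big(\log n-\mathcal S(\bm\Psi_n(x))\big)$. Let $x=\cos\theta$ with $\theta/\pi=s/k$, where $s,k\in\mathbb{N}$, $s<k$, $\operatorname{GCD}(s,k)=1$. Then $$\mathcal D_\infty(x)=\begin{cases}1-\log2+\mathcal R\!\left(\frac1k\right)>1-\log2, & k \text{ even},\\[2mm] 1-\log2+2\Big[\mathcal R\!\left(\frac1{2k}\right)-\frac12\mathcal R\!\left(\frac1k\right)\Big]<1-\log2, & k\text{ odd},\end{cases}$$ where $\mathcal R(y)=-y\big(\psi(1-y)+2\gamma+\psi(1+y)\big)$ for $|y|<1$.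
   Context: $\psi=\Gamma'/\Gamma$ is the digamma function and $\gamma$ is the Euler–Mascheroni constant; equivalently $\mathcal R(y)=2\sum_{m\ge1}\zeta(2m+1)y^{2m+1}$ for $|y|<1$, with $\zeta$ the Riemann zeta function. $\theta\in(0,\pi)$. $\operatorname{GCD}$ is the greatest common divisor. *)

theory Defs
  imports "HOL-Analysis.Analysis"
begin

definition cheb_p :: "nat \<Rightarrow> real \<Rightarrow> real" where
  "cheb_p n x = (if n = 0 then 1 / sqrt pi else sqrt (2 / pi) * cos (real n * arccos x))"

definition christoffel :: "nat \<Rightarrow> real \<Rightarrow> real" where
  "christoffel n x = 1 / (\<Sum>i<n. (cheb_p i x)\<^sup>2)"

definition Psi :: "nat \<Rightarrow> nat \<Rightarrow> real \<Rightarrow> real" where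
  "Psi n j x = christoffel n x * (cheb_p (j - 1) x)\<^sup>2"

definition entropy_Psi :: "nat \<Rightarrow> real \<Rightarrow> real" where
  "entropy_Psi n x = - (\<Sum>j=1..n. (if Psi n j x = 0 then 0 else Psi n j x * ln (Psi n j x)))"

definition R_fun :: "real \<Rightarrow> real" where
  "R_fun y = - y * (Digamma (1 - y) + 2 * euler_mascheroni + Digamma (1 + y))"

end

theory Submission
  imports Defs
begin

text \<open>
  For \<open>x = cos \<theta>\<close> one has \<open>\<pi> p i x ^ 2 = w i = 1 + cos (2 i \<theta>)\<close> for \<open>i \<ge> 1\<close>, and since
  \<open>2 \<theta> = 2 \<pi> s / k\<close> the weights \<open>w i\<close> are \<open>k\<close>-periodic with mean 1.  Writing the entropy
  through these weights, \<open>log n - S(\<Psi> n x)\<close> tends to the periodic mean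
  \<open>(1/k) \<Sum>i<k. w i log (w i)\<close>.

  To evaluate this mean, expand \<open>log (1 + 2 r cos a + r\<^sup>2) = \<Sum>m. 2 (-1)^(m+1) r^m cos (m a) / m\<close>,
  multiply by \<open>1 + cos a\<close> and average over the \<open>k\<close> sample points \<open>a = 2 \<pi> i s / k\<close>: only the
  Fourier coefficients at multiples \<open>m = k N\<close> survive.  They are uniformly summable for
  \<open>0 \<le> r \<le> 1\<close>, so one may let \<open>r \<rightarrow> 1\<close>, where the coefficient at \<open>m\<close> becomes
  \<open>(-1)^m (1/(m-1) - 2/m + 1/(m+1))\<close>.  The digamma series of \<open>\<R>\<close> gives
  \<open>\<R>(1/q) = \<Sum>N\<ge>1. 1/(qN-1) - 2/(qN) + 1/(qN+1)\<close>, which identifies the resulting series with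
  \<open>\<R>(1/k)\<close> for even \<open>k\<close> and with \<open>2 \<R>(1/(2k)) - \<R>(1/k)\<close> for odd \<open>k\<close>; the signs follow
  termwise.
\<close>

section \<open>The function \<R>\<close>

lemma R_fun_sums:
  fixes y :: real
  assumes "0 < y" "y < 1"
  shows "(\<lambda>n. 2 * y^3 / ((real n + 1) * ((real n + 1)^2 - y^2))) sums R_fun y"
proof -
  have digamma_sums: "(\<lambda>n. inverse (real (Suc n)) - inverse (z + real n)) sums (Digamma z + euler_mascheroni)"
    if "z > 0" for z :: real
    using summable_Digamma[of z] that by (simp add: Digamma_def summable_sums)
  have "(\<lambda>n. -y * ((inverse (real (Suc n)) - inverse ((1-y) + real n))
                  + (inverse (real (Suc n)) - inverse ((1+y) + real n))))
     sums (-y * ((Digamma (1-y) + euler_mascheroni) + (Digamma (1+y) + euler_mascheroni)))"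
    using assms by (intro sums_mult sums_add digamma_sums) auto
  moreover have "-y * ((inverse (real (Suc n)) - inverse ((1-y) + real n))
                       + (inverse (real (Suc n)) - inverse ((1+y) + real n)))
               = 2 * y^3 / ((real n + 1) * ((real n + 1)^2 - y^2))" for n
  proof -
    define N where "N = real n + 1"
    have N: "real (Suc n) = N" "(1 - y) + real n = N - y" "(1 + y) + real n = N + y" "real n + 1 = N"
      by (auto simp: N_def)
    have "N - y > 0" "N + y > 0" "N \<noteq> 0" using assms by (auto simp: N_def)
    moreover have "N^2 - y^2 = (N - y) * (N + y)" by (simp add: power2_eq_square algebra_simps)
    ultimately have "N - y \<noteq> 0" "N + y \<noteq> 0" "N \<noteq> 0" "N^2 - y^2 \<noteq> 0" by auto
    then show ?thesis
      unfolding N by (simp add: divide_simps) (simp add: power2_eq_square power3_eq_cube algebra_simps)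
  qed
  ultimately show ?thesis
    by (simp add: R_fun_def algebra_simps)
qed

definition inv_second_diff :: "real \<Rightarrow> real" where
  "inv_second_diff m = 1 / (m - 1) - 2 / m + 1 / (m + 1)"

lemma inv_second_diff_eq:
  assumes "m > 1"
  shows "inv_second_diff m = 2 / (m * (m^2 - 1))"
proof -
  have "m^2 - 1 = (m - 1) * (m + 1)" by (simp add: power2_eq_square algebra_simps)
  moreover have "m - 1 \<noteq> 0" "m + 1 \<noteq> 0" "m \<noteq> 0" using assms by auto
  ultimately show ?thesis
    unfolding inv_second_diff_def by (simp add: divide_simps) (simp add: algebra_simps)
qed

lemma inv_second_diff_pos: "m > 1 \<Longrightarrow> inv_second_diff m > 0"
  using one_less_power[of m 2] by (simp add: inv_second_diff_eq)

lemma inv_second_diff_double_less: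
  assumes "m > 1"
  shows "2 * inv_second_diff (2 * m) < inv_second_diff m"
proof -
  have "m^2 > 1" "4 * m^2 > 1" using one_less_power[OF assms, of 2] by simp_all
  have "2 * inv_second_diff (2 * m) = 2 / (m * (4 * m^2 - 1))"
    using assms inv_second_diff_eq[of "2 * m"] by (simp add: power_mult_distrib)
  also have "\<dots> < 2 / (m * (m^2 - 1))"
  proof (intro divide_strict_left_mono mult_strict_left_mono)
    show "0 < m * (4 * m^2 - 1) * (m * (m^2 - 1))"
      using assms \<open>m^2 > 1\<close> \<open>4 * m^2 > 1\<close> by (intro mult_pos_pos) auto
  qed (use assms \<open>m^2 > 1\<close> in auto)
  also have "\<dots> = inv_second_diff m"
    using assms by (simp add: inv_second_diff_eq)
  finally show ?thesis .
qed

lemma one_less_real_mult_Suc: "2 \<le> q \<Longrightarrow> 1 < real (q * Suc n)"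
proof -
  assume "2 \<le> q"
  then have "2 * 1 \<le> q * Suc n" by (intro mult_mono) auto
  then show ?thesis by linarith
qed

lemma R_fun_inverse_sums:
  fixes q :: nat
  assumes "q \<ge> 2"
  shows "(\<lambda>n. inv_second_diff (real (q * Suc n))) sums R_fun (1 / real q)"
proof -
  have "2 * (1 / real q)^3 / ((real n + 1) * ((real n + 1)^2 - (1 / real q)^2))
        = inv_second_diff (real (q * Suc n))" for n
  proof -
    define Q N M where "Q = real q" and "N = real n + 1" and "M = real (q * Suc n)"
    have "M = Q * N" "Q > 0" "N > 0" using assms by (simp_all add: Q_def N_def M_def algebra_simps)
    have "M > 1" using one_less_real_mult_Suc[OF assms] by (simp add: M_def)
    then have "M^2 - 1 > 0" using one_less_power[of M 2] by simp
    have "N^2 - (1 / Q)^2 = (M^2 - 1) / Q^2"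
      using \<open>M = Q * N\<close> \<open>Q > 0\<close> by (simp add: field_simps power_mult_distrib)
    then have "2 * (1 / Q)^3 / (N * (N^2 - (1 / Q)^2)) = 2 / (Q * N * (M^2 - 1))"
      using \<open>Q > 0\<close> \<open>N > 0\<close> \<open>M^2 - 1 > 0\<close> by (simp add: divide_simps power3_eq_cube power2_eq_square)
    also have "\<dots> = inv_second_diff M"
      using \<open>M > 1\<close> \<open>M = Q * N\<close> by (simp add: inv_second_diff_eq)
    finally show ?thesis by (simp add: Q_def N_def M_def)
  qed
  then show ?thesis
    using R_fun_sums[of "1 / real q"] assms by simp
qed

lemma R_fun_inverse_pos:
  fixes q :: nat
  assumes "q \<ge> 2"
  shows "R_fun (1 / real q) > 0"
proof -
  have "0 < (\<Sum>n. inv_second_diff (real (q * Suc n)))"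
    using R_fun_inverse_sums[OF assms] one_less_real_mult_Suc[OF assms]
    by (intro suminf_pos) (auto simp: sums_iff intro: inv_second_diff_pos)
  then show ?thesis
    using R_fun_inverse_sums[OF assms] by (simp add: sums_iff)
qed

lemma R_fun_alternating_sums:
  fixes k :: nat
  assumes "k \<ge> 2"
  shows "(\<lambda>n. (-1)^Suc n * inv_second_diff (real (k * Suc n)))
           sums (2 * R_fun (1 / (2 * real k)) - R_fun (1 / real k))"
proof -
  define t where "t n = inv_second_diff (real (k * Suc n))" for n
  have "(\<lambda>j. inv_second_diff (real (2 * k * Suc j))) sums R_fun (1 / (2 * real k))"
    using R_fun_inverse_sums[of "2 * k"] assms by simp
  from sums_mult[OF this, of 2]
  have "(\<lambda>j. 2 * inv_second_diff (real (2 * k * Suc j))) sums (2 * R_fun (1 / (2 * real k)))" .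
  moreover have "2 * inv_second_diff (real (2 * k * Suc j)) = (1 + (-1)^Suc (2*j+1)) * t (2*j+1)" for j
    by (simp add: t_def algebra_simps)
  ultimately have "(\<lambda>j. (1 + (-1)^Suc (2*j+1)) * t (2*j+1)) sums (2 * R_fun (1 / (2 * real k)))"
    by simp
  moreover have "(1 + (-1)^Suc n) * t n = 0" if "n \<notin> range (\<lambda>j. 2*j+1)" for n
  proof -
    have "even n"
    proof (rule ccontr)
      assume "odd n"
      then obtain j where "n = 2 * j + 1" by (rule oddE)
      with that show False by auto
    qed
    then show ?thesis by simp
  qed
  ultimately have "(\<lambda>n. (1 + (-1)^Suc n) * t n) sums (2 * R_fun (1 / (2 * real k)))"
    by (subst (asm) sums_mono_reindex) (auto simp: strict_mono_def)
  from sums_diff[OF this R_fun_inverse_sums[OF assms, folded t_def]]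
  show ?thesis
    by (simp add: t_def algebra_simps)
qed

lemma R_fun_alternating_neg:
  fixes k :: nat
  assumes "k \<ge> 2"
  shows "2 * R_fun (1 / (2 * real k)) - R_fun (1 / real k) < 0"
proof -
  define d where "d n = inv_second_diff (real (k * Suc n)) - 2 * inv_second_diff (real (2 * k * Suc n))" for n
  have "(\<lambda>n. inv_second_diff (real (2 * k * Suc n))) sums R_fun (1 / (2 * real k))"
    using R_fun_inverse_sums[of "2 * k"] assms by simp
  then have "d sums (R_fun (1 / real k) - 2 * R_fun (1 / (2 * real k)))"
    unfolding d_def by (intro sums_diff sums_mult R_fun_inverse_sums assms)
  moreover have "0 < d n" for n
    using inv_second_diff_double_less[OF one_less_real_mult_Suc[OF assms, of n]]
    by (simp add: d_def mult.assoc)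
  ultimately have "0 < R_fun (1 / real k) - 2 * R_fun (1 / (2 * real k))"
    using suminf_pos[of d] by (simp add: sums_iff)
  then show ?thesis by simp
qed

lemma signed_inv_second_diff_sums:
  fixes k :: nat
  assumes "k \<ge> 2"
  shows "(\<lambda>n. (-1)^(k * Suc n) * inv_second_diff (real (k * Suc n)))
           sums (if even k then R_fun (1 / real k) else 2 * R_fun (1 / (2 * real k)) - R_fun (1 / real k))"
proof (cases "even k")
  case True
  then show ?thesis using R_fun_inverse_sums[OF assms] by simp
next
  case False
  then have "(-1::real)^(k * Suc n) = (-1)^Suc n" for n
    by (simp only: power_mult) simp
  then show ?thesis using False R_fun_alternating_sums[OF assms] by simp
qed

section \<open>Cesaro means of periodic sequences\<close>

lemma tendsto_bounded_over_real_nat: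
  fixes g :: "nat \<Rightarrow> real"
  assumes "\<And>n. \<bar>g n\<bar> \<le> B"
  shows "(\<lambda>n. g n / real n) \<longlonglongrightarrow> 0"
proof (rule Lim_null_comparison)
  show "\<forall>\<^sub>F n in sequentially. norm (g n / real n) \<le> B / real n"
    using assms by (intro always_eventually allI) (simp add: abs_divide divide_right_mono)
qed (rule lim_const_over_n)

lemma periodic_mult_add:
  fixes f :: "nat \<Rightarrow> 'a" and k q i :: nat
  assumes "\<And>i. f (i + k) = f i"
  shows "f (q * k + i) = f i"
proof (induction q)
  case (Suc q)
  then show ?case using assms[of "q * k + i"] by (simp add: algebra_simps)
qed simp

lemma sum_lessThan_periodic:
  fixes f :: "nat \<Rightarrow> 'a::comm_semiring_1"
  assumes periodic: "\<And>i. f (i + k) = f i"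
  shows "(\<Sum>i<n. f i) = of_nat (n div k) * (\<Sum>i<k. f i) + (\<Sum>i<n mod k. f i)"
proof -
  have split: "(\<Sum>i<a + b. f i) = (\<Sum>i<a. f i) + (\<Sum>i<b. f (a + i))" for a b
    by (induction b) (simp_all add: add.assoc)
  have periods: "(\<Sum>i<q * k. f i) = of_nat q * (\<Sum>i<k. f i)" for q
  proof (induction q)
    case (Suc q)
    have "(\<Sum>i<Suc q * k. f i) = (\<Sum>i<q * k + k. f i)" by (simp add: add.commute)
    also have "\<dots> = (\<Sum>i<q * k. f i) + (\<Sum>i<k. f (q * k + i))" by (rule split)
    also have "(\<Sum>i<k. f (q * k + i)) = (\<Sum>i<k. f i)"
      by (simp only: periodic_mult_add[of f k, OF periodic])
    finally show ?case using Suc by (simp add: algebra_simps)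
  qed simp
  have "(\<Sum>i<n. f i) = (\<Sum>i<n div k * k + n mod k. f i)" by simp
  also have "\<dots> = of_nat (n div k) * (\<Sum>i<k. f i) + (\<Sum>i<n mod k. f i)"
    by (simp only: split periods periodic_mult_add[of f k, OF periodic])
  finally show ?thesis .
qed

lemma periodic_Cesaro_mean_tendsto:
  fixes f :: "nat \<Rightarrow> real"
  assumes periodic: "\<And>i. f (i + k) = f i" and "k > 0"
  shows "(\<lambda>n. (\<Sum>i<n. f i) / real n) \<longlonglongrightarrow> (\<Sum>i<k. f i) / real k"
proof -
  define P where "P = (\<Sum>i<k. f i)"
  define E where "E n = (\<Sum>i<n mod k. f i) - real (n mod k) / real k * P" for n
  have "(\<Sum>i<n. f i) = real n / real k * P + E n" for n
  proof -
    have "real n = real (n div k) * real k + real (n mod k)"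
      by (metis div_mult_mod_eq of_nat_add of_nat_mult)
    then have "real (n div k) = real n / real k - real (n mod k) / real k"
      using \<open>k > 0\<close> by (simp add: field_simps)
    moreover have "(\<Sum>i<n. f i) = real (n div k) * P + (\<Sum>i<n mod k. f i)"
      using sum_lessThan_periodic[of f k n, OF periodic] by (simp add: P_def)
    ultimately show ?thesis
      unfolding E_def by (simp add: left_diff_distrib)
  qed
  then have mean: "(\<Sum>i<n. f i) / real n = P / real k + E n / real n" if "n > 0" for n
    using that by (simp add: field_simps)
  have "\<bar>E n\<bar> \<le> (\<Sum>i<k. \<bar>f i\<bar>) + \<bar>P\<bar>" for n
  proof -
    have "\<bar>\<Sum>i<n mod k. f i\<bar> \<le> (\<Sum>i<n mod k. \<bar>f i\<bar>)" by (rule sum_abs)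
    also have "\<dots> \<le> (\<Sum>i<k. \<bar>f i\<bar>)" using \<open>k > 0\<close> by (intro sum_mono2) auto
    finally have "\<bar>\<Sum>i<n mod k. f i\<bar> \<le> (\<Sum>i<k. \<bar>f i\<bar>)" .
    moreover have "\<bar>real (n mod k) / real k * P\<bar> \<le> \<bar>P\<bar>"
      using \<open>k > 0\<close> unfolding abs_mult by (intro mult_left_le_one_le) auto
    ultimately show ?thesis unfolding E_def by linarith
  qed
  then have "(\<lambda>n. E n / real n) \<longlonglongrightarrow> 0"
    by (rule tendsto_bounded_over_real_nat)
  then have "(\<lambda>n. P / real k + E n / real n) \<longlonglongrightarrow> P / real k"
    using tendsto_add[OF tendsto_const, of "\<lambda>n. E n / real n" 0 sequentially "P / real k"] by simp
  then show ?thesis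
    unfolding P_def[symmetric]
  proof (rule Lim_transform_eventually)
    show "\<forall>\<^sub>F n in sequentially. P / real k + E n / real n = (\<Sum>i<n. f i) / real n"
      using eventually_gt_at_top[of 0] by eventually_elim (simp add: mean)
  qed
qed

lemma Cesaro_mean_fun_upd_tendsto:
  fixes f :: "nat \<Rightarrow> real"
  assumes "(\<lambda>n. (\<Sum>i<n. f i) / real n) \<longlonglongrightarrow> L"
  shows "(\<lambda>n. (\<Sum>i<n. (f(0 := c)) i) / real n) \<longlonglongrightarrow> L"
proof (rule Lim_transform_eventually)
  show "(\<lambda>n. (\<Sum>i<n. f i) / real n + (c - f 0) / real n) \<longlonglongrightarrow> L"
    using tendsto_add[OF assms lim_const_over_n[of "c - f 0"]] by simp
  have eq: "(\<Sum>i<n. if i = 0 then c else f i) = (\<Sum>i<n. f i) + (c - f 0)" if "n > 0" for n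
  proof -
    have "(\<Sum>i<n. if i = 0 then c else f i) = (\<Sum>i<n. f i + (if i = 0 then c - f 0 else 0))"
      by (intro sum.cong) auto
    with that show ?thesis by (simp add: sum.distrib)
  qed
  show "\<forall>\<^sub>F n in sequentially. (\<Sum>i<n. f i) / real n + (c - f 0) / real n = (\<Sum>i<n. (f(0 := c)) i) / real n"
    using eventually_gt_at_top[of 0] by eventually_elim (simp add: eq add_divide_distrib)
qed

section \<open>Chebyshev weights and the entropy\<close>

lemma sum_cos_roots_of_unity:
  fixes s k m :: nat
  assumes "0 < k" and "coprime s k"
  shows "(\<Sum>i<k. cos (real m * (real i * (2 * pi * real s / real k)))) = (if k dvd m then real k else 0)"
proof -
  define \<beta> where "\<beta> = 2 * pi * real s / real k"
  define z where "z = cis (real m * \<beta>)"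
  have "Re (z ^ i) = cos (real m * (real i * \<beta>))" for i
    by (simp add: z_def Complex.DeMoivre mult.left_commute)
  then have "(\<Sum>i<k. cos (real m * (real i * \<beta>))) = Re (\<Sum>i<k. z ^ i)"
    by simp
  moreover have "z ^ k = 1"
    using assms(1) cis_multiple_2pi[of "real (m * s)"]
    by (simp add: z_def \<beta>_def Complex.DeMoivre algebra_simps)
  moreover have "z = 1 \<longleftrightarrow> k dvd m"
  proof
    assume "z = 1"
    then obtain n :: int where "real m * (2 * pi * real s / real k) = of_int n * 2 * pi"
      using cos_one_2pi_int[of "real m * \<beta>"] by (auto simp: z_def \<beta>_def complex_eq_iff)
    then have "real (m * s) = real_of_int (n * int k)"
      using assms(1) by (simp add: field_simps)
    then have "int k dvd int (m * s)"
      by (metis dvd_triv_right of_int_eq_iff of_int_of_nat_eq)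
    then show "k dvd m"
      using assms(2) by (simp add: coprime_commute coprime_dvd_mult_left_iff)
  next
    assume "k dvd m"
    then obtain q where "m = k * q" by blast
    then show "z = 1"
      using assms(1) cis_multiple_2pi[of "real (q * s)"] by (simp add: z_def \<beta>_def algebra_simps)
  qed
  ultimately show ?thesis
    by (auto simp: sum_gp_strict \<beta>_def)
qed

definition cheb_weight :: "real \<Rightarrow> nat \<Rightarrow> real" where
  "cheb_weight \<alpha> i = 1 + cos (real i * \<alpha>)"

lemma cheb_weight_nonneg: "cheb_weight \<alpha> i \<ge> 0"
  using cos_ge_minus_one[of "real i * \<alpha>"] unfolding cheb_weight_def by linarith

lemma pi_cheb_p_cos_squared:
  assumes "0 \<le> \<theta>" "\<theta> \<le> pi"
  shows "pi * (cheb_p i (cos \<theta>))^2 = (if i = 0 then 1 else cheb_weight (2 * \<theta>) i)"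
proof (cases "i = 0")
  case False
  have "cos (real i * (2 * \<theta>)) = 2 * (cos (real i * \<theta>))^2 - 1"
    using cos_double_cos[of "real i * \<theta>"] by (simp add: algebra_simps)
  with False assms show ?thesis
    by (simp add: cheb_p_def cheb_weight_def arccos_cos power_mult_distrib)
qed (simp add: cheb_p_def power_divide)

lemma entropy_Psi_eq:
  fixes x :: real
  assumes "n > 0"
  defines "v \<equiv> \<lambda>i. pi * (cheb_p i x)^2"
  shows "entropy_Psi n x = ln (\<Sum>i<n. v i) - (\<Sum>i<n. v i * ln (v i)) / (\<Sum>i<n. v i)"
proof -
  define W where "W = (\<Sum>i<n. v i)"
  have "v 0 = 1" by (simp add: v_def cheb_p_def power_divide)
  moreover have "v 0 \<le> W" unfolding W_def v_def using assms by (intro member_le_sum) auto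
  ultimately have "W \<ge> 1" by simp
  have Psi: "Psi n (Suc i) x = v i / W" for i
    by (simp add: Psi_def christoffel_def W_def v_def sum_distrib_left[symmetric])
  have "(if Psi n (Suc i) x = 0 then 0 else Psi n (Suc i) x * ln (Psi n (Suc i) x))
        = v i * ln (v i) / W - v i / W * ln W" for i
  proof (cases "v i = 0")
    case False
    then have "v i > 0" by (simp add: v_def)
    with \<open>W \<ge> 1\<close> show ?thesis
      by (simp add: Psi ln_div diff_divide_distrib right_diff_distrib)
  qed (simp add: Psi)
  then have "entropy_Psi n x = - (\<Sum>i<n. v i * ln (v i) / W - v i / W * ln W)"
    unfolding entropy_Psi_def by (simp add: sum.atLeast1_atMost_eq atLeastAtMost_iff)
  also have "\<dots> = (\<Sum>i<n. v i) / W * ln W - (\<Sum>i<n. v i * ln (v i)) / W"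
    by (simp add: sum_subtractf sum_divide_distrib[symmetric] sum_distrib_right[symmetric])
  finally show ?thesis
    using \<open>W \<ge> 1\<close> by (simp add: W_def)
qed

lemma ln_minus_entropy_Psi_tendsto:
  fixes x C :: real
  defines "v \<equiv> \<lambda>i. pi * (cheb_p i x)^2"
  assumes "(\<lambda>n. (\<Sum>i<n. v i) / real n) \<longlonglongrightarrow> 1"
    and "(\<lambda>n. (\<Sum>i<n. v i * ln (v i)) / real n) \<longlonglongrightarrow> C"
  shows "(\<lambda>n. ln (real n) - entropy_Psi n x) \<longlonglongrightarrow> C"
proof (rule Lim_transform_eventually)
  let ?W = "\<lambda>n. (\<Sum>i<n. v i) / real n" and ?H = "\<lambda>n. (\<Sum>i<n. v i * ln (v i)) / real n"
  have "(\<lambda>n. - ln (?W n) + ?H n / ?W n) \<longlonglongrightarrow> - ln 1 + C / 1"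
    using assms(2,3) by (intro tendsto_intros) auto
  then show "(\<lambda>n. - ln (?W n) + ?H n / ?W n) \<longlonglongrightarrow> C" by simp
  have eq: "ln (real n) - entropy_Psi n x = - ln (?W n) + ?H n / ?W n" if "n > 0" for n
  proof -
    have "(\<Sum>i<n. v i) \<ge> v 0" using that by (intro member_le_sum) (auto simp: v_def)
    then have "(\<Sum>i<n. v i) > 0" by (simp add: v_def cheb_p_def power_divide)
    with that show ?thesis
      unfolding entropy_Psi_eq[OF that] v_def by (simp add: ln_div)
  qed
  show "\<forall>\<^sub>F n in sequentially. - ln (?W n) + ?H n / ?W n = ln (real n) - entropy_Psi n x"
    using eventually_gt_at_top[of 0] by eventually_elim (simp add: eq)
qed

lemma cheb_weight_periodic:
  assumes "real k * \<alpha> = 2 * pi * real s"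
  shows "cheb_weight \<alpha> (i + k) = cheb_weight \<alpha> i"
proof -
  have "real (i + k) * \<alpha> = real i * \<alpha> + 2 * real s * pi"
    using assms by (simp add: algebra_simps)
  then show ?thesis
    by (simp add: cheb_weight_def cos_add)
qed

lemma sum_cheb_weight_roots_of_unity:
  assumes "k > 1" and "coprime s k"
  shows "(\<Sum>i<k. cheb_weight (2 * pi * real s / real k) i) = real k"
  using sum_cos_roots_of_unity[of k s 1] assms by (simp add: cheb_weight_def sum.distrib)

lemma ln_minus_entropy_Psi_rational_tendsto:
  fixes s k :: nat
  assumes "0 < s" "s < k" "coprime s k" "\<theta> = pi * real s / real k"
  defines "w \<equiv> cheb_weight (2 * \<theta>)"
  shows "(\<lambda>n. ln (real n) - entropy_Psi n (cos \<theta>)) \<longlonglongrightarrow> (\<Sum>i<k. w i * ln (w i)) / real k"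
proof (rule ln_minus_entropy_Psi_tendsto)
  have "real s / real k \<le> 1" using assms(2) by simp
  then have "0 \<le> \<theta>" "\<theta> \<le> pi"
    using assms(4) mult_left_le[of "real s / real k" pi] by simp_all
  then have v: "pi * (cheb_p i (cos \<theta>))^2 = (w(0 := 1)) i" for i
    by (simp add: w_def pi_cheb_p_cos_squared)
  then have v_ln_v: "pi * (cheb_p i (cos \<theta>))^2 * ln (pi * (cheb_p i (cos \<theta>))^2)
                     = ((\<lambda>i. w i * ln (w i))(0 := 0)) i" for i
    by simp
  have "real k * (2 * \<theta>) = 2 * pi * real s" using assms(2,4) by simp
  then have periodic: "w (i + k) = w i" for i
    unfolding w_def by (rule cheb_weight_periodic)
  have "2 * \<theta> = 2 * pi * real s / real k" using assms(4) by simp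
  then have "(\<Sum>i<k. w i) = real k"
    using sum_cheb_weight_roots_of_unity[of k s] assms(1-3) by (simp add: w_def)
  then have "(\<lambda>n. (\<Sum>i<n. w i) / real n) \<longlonglongrightarrow> 1"
    using periodic_Cesaro_mean_tendsto[of w k, OF periodic] assms(2) by simp
  then show "(\<lambda>n. (\<Sum>i<n. pi * (cheb_p i (cos \<theta>))^2) / real n) \<longlonglongrightarrow> 1"
    unfolding v by (rule Cesaro_mean_fun_upd_tendsto)
  have "(\<lambda>n. (\<Sum>i<n. w i * ln (w i)) / real n) \<longlonglongrightarrow> (\<Sum>i<k. w i * ln (w i)) / real k"
    using periodic assms(2) by (intro periodic_Cesaro_mean_tendsto) auto
  then show "(\<lambda>n. (\<Sum>i<n. pi * (cheb_p i (cos \<theta>))^2 * ln (pi * (cheb_p i (cos \<theta>))^2)) / real n)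
               \<longlonglongrightarrow> (\<Sum>i<k. w i * ln (w i)) / real k"
    unfolding v_ln_v by (rule Cesaro_mean_fun_upd_tendsto)
qed

section \<open>Fourier series of \<open>log (1 + 2 r cos a + r\<^sup>2)\<close>\<close>

definition ln_coeff :: "real \<Rightarrow> nat \<Rightarrow> real" where
  "ln_coeff r m = 2 * (-1)^Suc m / real m * r^m"

text \<open>If \<open>f(a) = \<Sum>\<^sub>m b\<^sub>m cos (m a)\<close> then \<open>(1 + cos a) f(a) = \<Sum>\<^sub>m raised_cos_coeff b m \<cdot> cos (m a)\<close>,
  provided \<open>b 0 = 0\<close> (so that the truncated index \<open>0 - 1 = 0\<close> is harmless).\<close>
definition raised_cos_coeff :: "(nat \<Rightarrow> real) \<Rightarrow> nat \<Rightarrow> real" where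
  "raised_cos_coeff b m = b m + (b (m - 1) + b (m + 1)) / 2"

lemma ln_cos_series:
  fixes r a :: real
  assumes "\<bar>r\<bar> < 1"
  shows "(\<lambda>m. ln_coeff r m * cos (real m * a)) sums ln (1 + 2 * r * cos a + r^2)"
proof -
  define z where "z = complex_of_real r * cis a"
  have "norm z < 1" using assms by (simp add: z_def norm_mult)
  then have "(\<lambda>m. Re ((-1)^Suc m / of_nat m * z^m)) sums Re (ln (1 + z))"
    using Ln_series by (simp add: sums_complex_iff)
  from sums_mult[OF this, of 2]
  have "(\<lambda>m. 2 * Re ((-1)^Suc m / of_nat m * z^m)) sums (2 * Re (ln (1 + z)))" .
  moreover have "2 * Re ((-1)^Suc m / of_nat m * z^m) = ln_coeff r m * cos (real m * a)" for m
  proof -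
    have "Re (z^m) = r^m * cos (real m * a)"
      by (simp add: z_def power_mult_distrib Complex.DeMoivre flip: of_real_power)
    moreover have "(-1)^Suc m / of_nat m * z^m = complex_of_real ((-1)^Suc m / real m) * z^m"
      by simp
    ultimately have "Re ((-1)^Suc m / of_nat m * z^m) = (-1)^Suc m / real m * (r^m * cos (real m * a))"
      by (simp only: Re_complex_of_real) simp
    then show ?thesis by (simp add: ln_coeff_def)
  qed
  moreover have "2 * Re (ln (1 + z)) = ln (1 + 2 * r * cos a + r^2)"
  proof -
    have "1 + z \<noteq> 0" using \<open>norm z < 1\<close> by (metis add_eq_0_iff norm_minus_cancel norm_one less_irrefl)
    have "(norm (1 + z))^2 = (1 + r * cos a)^2 + (r * sin a)^2"
      by (simp add: cmod_power2 z_def)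
    also have "\<dots> = 1 + 2 * r * cos a + r^2"
      using sin_cos_squared_add[of a] by algebra
    finally have "ln ((norm (1 + z))^2) = ln (1 + 2 * r * cos a + r^2)" by simp
    with \<open>1 + z \<noteq> 0\<close> show ?thesis by (simp add: ln_realpow)
  qed
  ultimately show ?thesis
    by simp
qed

lemma ln_coeff_0 [simp]: "ln_coeff r 0 = 0"
  by (simp add: ln_coeff_def)

lemma abs_ln_coeff_le: "\<bar>ln_coeff r m\<bar> \<le> 2 * \<bar>r\<bar>^m"
proof (cases "m = 0")
  case False
  then have "2 / real m * \<bar>r\<bar>^m \<le> 2 * \<bar>r\<bar>^m"
    by (intro mult_right_mono) (auto simp: divide_le_eq)
  then show ?thesis by (simp add: ln_coeff_def abs_mult power_abs)
qed simp

lemma summable_abs_ln_coeff: "\<bar>r\<bar> < 1 \<Longrightarrow> summable (\<lambda>m. \<bar>ln_coeff r m\<bar>)"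
  by (rule summable_comparison_test'[of "\<lambda>m. 2 * \<bar>r\<bar>^m"])
     (auto intro: summable_mult summable_geometric abs_ln_coeff_le)

lemma summable_mult_cos:
  fixes b :: "nat \<Rightarrow> real"
  shows "summable (\<lambda>m. \<bar>b m\<bar>) \<Longrightarrow> summable (\<lambda>m. b m * cos (g m))"
  by (rule summable_comparison_test'[of "\<lambda>m. \<bar>b m\<bar>"]) (auto simp: abs_mult mult_left_le)

lemma raised_cos_series:
  fixes b :: "nat \<Rightarrow> real"
  assumes "summable (\<lambda>m. \<bar>b m\<bar>)" and "b 0 = 0"
  shows "(\<lambda>m. raised_cos_coeff b m * cos (real m * a)) sums ((1 + cos a) * (\<Sum>m. b m * cos (real m * a)))"
proof -
  define S where "S = (\<Sum>m. b m * cos (real m * a))"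
  have S: "(\<lambda>m. b m * cos (real m * a)) sums S"
    unfolding S_def by (intro summable_sums summable_mult_cos assms(1))
  have up: "(\<lambda>m. b m * cos ((real m + 1) * a)) sums (\<Sum>m. b m * cos ((real m + 1) * a))"
    and down: "(\<lambda>m. b m * cos ((real m - 1) * a)) sums (\<Sum>m. b m * cos ((real m - 1) * a))"
    by (intro summable_sums summable_mult_cos assms(1))+
  \<comment> \<open>the two neighbours of index m are reached by shifting these two series\<close>
  have "(\<lambda>m. b (m - 1) * cos (real m * a)) sums (\<Sum>m. b m * cos ((real m + 1) * a))"
    using up sums_Suc_iff[of "\<lambda>m. b (m - 1) * cos (real m * a)"] assms(2) by (simp add: algebra_simps)
  moreover have "(\<lambda>m. b (m + 1) * cos (real m * a)) sums (\<Sum>m. b m * cos ((real m - 1) * a))"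
    using down sums_Suc_iff[of "\<lambda>m. b m * cos ((real m - 1) * a)"] assms(2) by (simp add: algebra_simps)
  moreover have "(\<Sum>m. b m * cos ((real m + 1) * a)) + (\<Sum>m. b m * cos ((real m - 1) * a)) = 2 * cos a * S"
  proof -
    have "cos ((real m + 1) * a) + cos ((real m - 1) * a) = 2 * cos a * cos (real m * a)" for m
      using cos_add[of "real m * a" a] cos_diff[of "real m * a" a]
      by (simp add: distrib_right left_diff_distrib)
    then have "b m * cos ((real m + 1) * a) + b m * cos ((real m - 1) * a) = 2 * cos a * (b m * cos (real m * a))" for m
      by (metis distrib_left mult.left_commute)
    with sums_add[OF up down] have "(\<lambda>m. 2 * cos a * (b m * cos (real m * a)))
        sums ((\<Sum>m. b m * cos ((real m + 1) * a)) + (\<Sum>m. b m * cos ((real m - 1) * a)))"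
      by simp
    with sums_mult[OF S, of "2 * cos a"] show ?thesis
      by (rule sums_unique2[symmetric])
  qed
  ultimately have "(\<lambda>m. b (m - 1) * cos (real m * a) + b (m + 1) * cos (real m * a)) sums (2 * cos a * S)"
    using sums_add by fastforce
  from sums_add[OF S sums_divide[OF this, of 2]] show ?thesis
    by (simp add: raised_cos_coeff_def S_def algebra_simps)
qed

lemma raised_cos_ln_coeff_0: "raised_cos_coeff (ln_coeff r) 0 = r"
  by (simp add: raised_cos_coeff_def ln_coeff_def)

lemma raised_cos_ln_coeff_eq:
  assumes "m \<ge> 2"
  shows "raised_cos_coeff (ln_coeff r) m
           = (-1)^m * (r^(m-1) / (real m - 1) - 2 * r^m / real m + r^(m+1) / (real m + 1))"
proof -
  have "real (m - 1) = real m - 1" "(- 1 :: real) ^ Suc (m - 1) = (- 1) ^ m"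
    using assms by (auto simp: of_nat_diff simp flip: power_Suc)
  moreover have "(- 1 :: real) ^ Suc m = - ((- 1) ^ m)" by simp
  ultimately show ?thesis
    by (simp add: raised_cos_coeff_def ln_coeff_def algebra_simps)
qed

lemma raised_cos_ln_coeff_1:
  assumes "m \<ge> 2"
  shows "raised_cos_coeff (ln_coeff 1) m = (-1)^m * inv_second_diff (real m)"
  using assms by (simp add: raised_cos_ln_coeff_eq inv_second_diff_def)

lemma real_mult_power_one_minus_le_one:
  fixes r :: real
  assumes "0 \<le> r" "r \<le> 1"
  shows "real m * r^(m - 1) * (1 - r) \<le> 1"
proof -
  have "real m * r^(m - 1) = (\<Sum>j<m. r^(m - 1))" by simp
  also have "\<dots> \<le> (\<Sum>j<m. r^j)"
    using assms by (intro sum_mono power_decreasing) auto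
  finally have "real m * r^(m - 1) * (1 - r) \<le> (\<Sum>j<m. r^j) * (1 - r)"
    using assms by (intro mult_right_mono) auto
  also have "\<dots> = 1 - r^m"
    using one_diff_power_eq[of r m] by (simp add: mult.commute)
  finally show ?thesis using zero_le_power[OF assms(1), of m] by linarith
qed

lemma abs_power_second_diff_le:
  fixes r :: real
  assumes "0 \<le> r" "r \<le> 1" and "m \<ge> 2"
  shows "\<bar>r^(m-1) / (real m - 1) - 2 * r^m / real m + r^(m+1) / (real m + 1)\<bar> \<le> 3 / (real m * (real m - 1))"
proof -
  define M p where "M = real m" and "p = r^(m - 1)"
  have "M \<ge> 2" "0 \<le> p" "p \<le> 1" using assms by (auto simp: M_def p_def power_le_one)
  have pm: "r^m = p * r" "r^(m+1) = p * r^2"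
    using assms(3) by (auto simp: p_def power2_eq_square simp flip: power_Suc2)
  \<comment> \<open>split into three terms, each between 0 and 1 / (M (M - 1))\<close>
  have split: "r^(m-1) / (M - 1) - 2 * r^m / M + r^(m+1) / (M + 1)
      = p * (1 - r)^2 / M + p / (M * (M - 1)) - p * r^2 / (M * (M + 1))"
    using \<open>M \<ge> 2\<close> unfolding pm p_def[symmetric]
    by (simp add: divide_simps) (simp add: power2_eq_square algebra_simps)
  have "M * p * (1 - r) \<le> 1"
    using real_mult_power_one_minus_le_one[OF assms(1,2), of m] by (simp add: M_def p_def)
  moreover have "(1 - r)^2 \<le> 1 - r"
    using mult_left_le_one_le[of "1 - r" "1 - r"] assms(1,2) by (simp add: power2_eq_square)
  then have "M * (p * (1 - r)^2) \<le> M * (p * (1 - r))"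
    using \<open>0 \<le> p\<close> \<open>M \<ge> 2\<close> by (intro mult_left_mono) auto
  ultimately have "M * (p * (1 - r)^2) \<le> 1" by (simp add: mult.assoc)
  then have "p * (1 - r)^2 / M \<le> 1 / (M * M)"
    using \<open>M \<ge> 2\<close> by (simp add: field_simps)
  also have "\<dots> \<le> 1 / (M * (M - 1))"
    using \<open>M \<ge> 2\<close> by (intro divide_left_mono mult_left_mono) auto
  finally have t1: "p * (1 - r)^2 / M \<le> 1 / (M * (M - 1))" .
  have t2: "p / (M * (M - 1)) \<le> 1 / (M * (M - 1))"
    using \<open>p \<le> 1\<close> \<open>M \<ge> 2\<close> by (intro divide_right_mono) auto
  have "p * r^2 \<le> 1" using \<open>0 \<le> p\<close> \<open>p \<le> 1\<close> assms(1,2) by (simp add: mult_le_one power_le_one)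
  then have t3: "p * r^2 / (M * (M + 1)) \<le> 1 / (M * (M - 1))"
    using \<open>M \<ge> 2\<close> by (intro frac_le) auto
  have "0 \<le> p * (1 - r)^2 / M" "0 \<le> p / (M * (M - 1))" "0 \<le> p * r^2 / (M * (M + 1))"
    using \<open>0 \<le> p\<close> \<open>M \<ge> 2\<close> by simp_all
  with t1 t2 t3 show ?thesis
    unfolding M_def[symmetric] split by (intro abs_leI) linarith+
qed

lemma abs_raised_cos_ln_coeff_le:
  assumes "0 \<le> r" "r \<le> 1" and "m \<ge> 2"
  shows "\<bar>raised_cos_coeff (ln_coeff r) m\<bar> \<le> 3 / (real m * (real m - 1))"
  using abs_power_second_diff_le[OF assms] assms(3) by (simp add: raised_cos_ln_coeff_eq abs_mult)

section \<open>The periodic mean of \<open>w log w\<close>\<close>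

lemma sums_multiples:
  fixes f :: "nat \<Rightarrow> real"
  assumes "k > 0" and "(\<lambda>m. if k dvd m then f m else 0) sums S"
  shows "(\<lambda>N. f (k * N)) sums S"
proof -
  have "strict_mono (\<lambda>N. k * N)" using assms(1) by (intro strict_monoI) simp
  moreover have "(if k dvd m then f m else 0) = 0" if "m \<notin> range (\<lambda>N. k * N)" for m
    using that by auto
  ultimately show ?thesis
    using sums_mono_reindex[of "\<lambda>N. k * N" "\<lambda>m. if k dvd m then f m else 0"] assms(2)
    by simp
qed

lemma raised_cos_ln_sample_sums:
  fixes s k :: nat and r :: real
  assumes "k > 0" and "coprime s k" and "\<bar>r\<bar> < 1"
  defines "\<alpha> \<equiv> 2 * pi * real s / real k"
  shows "(\<lambda>N. real k * raised_cos_coeff (ln_coeff r) (k * N))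
           sums (\<Sum>i<k. cheb_weight \<alpha> i * ln (1 + 2 * r * cos (real i * \<alpha>) + r^2))"
proof -
  define c where "c = raised_cos_coeff (ln_coeff r)"
  have "(\<lambda>m. c m * cos (real m * (real i * \<alpha>)))
          sums (cheb_weight \<alpha> i * ln (1 + 2 * r * cos (real i * \<alpha>) + r^2))" for i
    using raised_cos_series[OF summable_abs_ln_coeff[OF assms(3)] ln_coeff_0, of "real i * \<alpha>"]
      sums_unique[OF ln_cos_series[OF assms(3), of "real i * \<alpha>"]]
    by (simp add: c_def cheb_weight_def)
  then have "(\<lambda>m. \<Sum>i<k. c m * cos (real m * (real i * \<alpha>)))
               sums (\<Sum>i<k. cheb_weight \<alpha> i * ln (1 + 2 * r * cos (real i * \<alpha>) + r^2))"
    by (rule sums_sum)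
  moreover have "(\<Sum>i<k. c m * cos (real m * (real i * \<alpha>))) = (if k dvd m then real k * c m else 0)" for m
    using sum_cos_roots_of_unity[OF assms(1,2), of m] by (simp add: \<alpha>_def sum_distrib_left[symmetric])
  ultimately show ?thesis
    unfolding c_def by (intro sums_multiples assms(1)) simp
qed

lemma continuous_on_raised_cos_ln_multiples:
  assumes "k \<ge> 2"
  shows "continuous_on {0..1} (\<lambda>r. \<Sum>n. raised_cos_coeff (ln_coeff r) (k * Suc n))"
proof (rule uniform_limit_theorem)
  have bound: "norm (raised_cos_coeff (ln_coeff r) (k * Suc n)) \<le> 3 * inverse (real (Suc n) ^ 2)"
    if "r \<in> {0..1}" for r n
  proof -
    define M where "M = real (k * Suc n)"
    have "k * Suc n \<ge> 2"
      using assms mult_le_mono2[of 1 "Suc n" k] by simp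
    then have "\<bar>raised_cos_coeff (ln_coeff r) (k * Suc n)\<bar> \<le> 3 / (M * (M - 1))"
      using abs_raised_cos_ln_coeff_le[of r "k * Suc n"] that by (simp add: M_def)
    also have "\<dots> \<le> 3 / (real (Suc n) * real (Suc n))"
    proof -
      have "2 * real (Suc n) \<le> M"
        using assms unfolding M_def by (metis mult_le_mono1 of_nat_le_iff of_nat_mult of_nat_numeral)
      then have "real (Suc n) * real (Suc n) \<le> M * (M - 1)"
        by (intro mult_mono) auto
      with \<open>2 * real (Suc n) \<le> M\<close> show ?thesis
        by (intro divide_left_mono mult_pos_pos) auto
    qed
    also have "\<dots> = 3 * inverse (real (Suc n) ^ 2)"
      by (simp add: divide_inverse power2_eq_square)
    finally show ?thesis by simp
  qed
  have "summable (\<lambda>n. inverse (real n ^ 2))"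
    by (rule inverse_power_summable) simp
  then have "summable (\<lambda>n. 3 * inverse (real (Suc n) ^ 2))"
    by (intro summable_mult summable_Suc_iff[THEN iffD2])
  with bound show "uniform_limit {0..1} (\<lambda>N r. \<Sum>n<N. raised_cos_coeff (ln_coeff r) (k * Suc n))
                     (\<lambda>r. \<Sum>n. raised_cos_coeff (ln_coeff r) (k * Suc n)) sequentially"
    by (rule Weierstrass_m_test)
  show "\<forall>\<^sub>F N in sequentially. continuous_on {0..1} (\<lambda>r. \<Sum>n<N. raised_cos_coeff (ln_coeff r) (k * Suc n))"
    unfolding raised_cos_coeff_def ln_coeff_def by (intro always_eventually allI continuous_intros) auto
qed simp

lemma sum_cheb_weight_ln_tendsto_at_left_1:
  "((\<lambda>r. \<Sum>i<k. cheb_weight \<alpha> i * ln (1 + 2 * r * cos (real i * \<alpha>) + r^2))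
      \<longlongrightarrow> (\<Sum>i<k. cheb_weight \<alpha> i * ln (2 * cheb_weight \<alpha> i))) (at_left 1)"
proof (intro tendsto_sum)
  fix i
  show "((\<lambda>r. cheb_weight \<alpha> i * ln (1 + 2 * r * cos (real i * \<alpha>) + r^2))
          \<longlongrightarrow> cheb_weight \<alpha> i * ln (2 * cheb_weight \<alpha> i)) (at_left 1)"
  proof (cases "cheb_weight \<alpha> i = 0")
    case False
    then have "2 * cheb_weight \<alpha> i > 0"
      using cheb_weight_nonneg[of \<alpha> i] by simp
    then have "((\<lambda>r. cheb_weight \<alpha> i * ln (1 + 2 * r * cos (real i * \<alpha>) + r^2))
                 \<longlongrightarrow> cheb_weight \<alpha> i * ln (1 + 2 * 1 * cos (real i * \<alpha>) + 1^2)) (at_left 1)"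
      by (intro tendsto_intros) (auto simp: cheb_weight_def)
    then show ?thesis by (simp add: cheb_weight_def algebra_simps)
  qed simp
qed

lemma sum_cheb_weight_ln_double_weight:
  fixes s k :: nat
  assumes "k \<ge> 2" and "coprime s k"
  defines "\<alpha> \<equiv> 2 * pi * real s / real k"
  shows "(\<Sum>i<k. cheb_weight \<alpha> i * ln (2 * cheb_weight \<alpha> i))
           = real k * (1 + (\<Sum>n. raised_cos_coeff (ln_coeff 1) (k * Suc n)))"
proof -
  define F where "F r = (\<Sum>n. raised_cos_coeff (ln_coeff r) (k * Suc n))" for r
  define G where "G r = (\<Sum>i<k. cheb_weight \<alpha> i * ln (1 + 2 * r * cos (real i * \<alpha>) + r^2))" for r
  have G_eq: "G r = real k * (r + F r)" if "0 \<le> r" "r < 1" for r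
  proof -
    have "(\<lambda>N. real k * raised_cos_coeff (ln_coeff r) (k * N)) sums G r"
      using raised_cos_ln_sample_sums[of k s r] assms that by (simp add: G_def)
    then have "(\<lambda>n. real k * raised_cos_coeff (ln_coeff r) (k * Suc n)) sums (G r - real k * r)"
      using sums_Suc_iff[of "\<lambda>N. real k * raised_cos_coeff (ln_coeff r) (k * N)"]
      by (simp add: raised_cos_ln_coeff_0)
    from sums_divide[OF this, of "real k"] assms(1)
    have "F r = (G r - real k * r) / real k"
      by (simp add: F_def sums_iff)
    with assms(1) show ?thesis by (simp add: field_simps)
  qed
  \<comment> \<open>Abel's limit r \<rightarrow> 1-, made legitimate by the uniform convergence of F on [0, 1]\<close>
  have "continuous_on {0..1} F"
    unfolding F_def by (rule continuous_on_raised_cos_ln_multiples[OF assms(1)])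
  then have "(F \<longlongrightarrow> F 1) (at 1 within {0..1})"
    by (simp add: continuous_on_def)
  moreover have "at (1::real) within {0..1} = at_left 1"
    by (rule at_within_Icc_at_left) simp
  ultimately have "(F \<longlongrightarrow> F 1) (at_left 1)" by simp
  then have "((\<lambda>r. real k * (r + F r)) \<longlongrightarrow> real k * (1 + F 1)) (at_left 1)"
    by (intro tendsto_intros)
  then have "(G \<longlongrightarrow> real k * (1 + F 1)) (at_left 1)"
  proof (rule Lim_transform_eventually)
    show "\<forall>\<^sub>F r in at_left 1. real k * (r + F r) = G r"
      using eventually_at_left_real[OF zero_less_one] by eventually_elim (simp add: G_eq)
  qed
  moreover have "(G \<longlongrightarrow> (\<Sum>i<k. cheb_weight \<alpha> i * ln (2 * cheb_weight \<alpha> i))) (at_left 1)"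
    unfolding G_def by (rule sum_cheb_weight_ln_tendsto_at_left_1)
  ultimately show ?thesis
    using tendsto_unique[OF trivial_limit_at_left_real] by (simp add: F_def)
qed

lemma cheb_weight_ln_mean:
  fixes s k :: nat
  assumes "k \<ge> 2" and "coprime s k"
  defines "w \<equiv> cheb_weight (2 * pi * real s / real k)"
  shows "(\<Sum>i<k. w i * ln (w i)) / real k
           = 1 - ln 2 + (\<Sum>n. (-1)^(k * Suc n) * inv_second_diff (real (k * Suc n)))"
proof -
  have "w i * ln (2 * w i) = w i * ln (w i) + ln 2 * w i" for i
    using cheb_weight_nonneg[of _ i] by (cases "w i = 0") (auto simp: w_def ln_mult algebra_simps)
  then have "(\<Sum>i<k. w i * ln (2 * w i)) = (\<Sum>i<k. w i * ln (w i)) + ln 2 * real k"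
    using sum_cheb_weight_roots_of_unity[of k s] assms
    by (simp add: sum.distrib sum_distrib_left[symmetric] w_def)
  moreover have "raised_cos_coeff (ln_coeff 1) (k * Suc n) = (-1)^(k * Suc n) * inv_second_diff (real (k * Suc n))" for n
    using assms(1) mult_le_mono2[of 1 "Suc n" k] by (intro raised_cos_ln_coeff_1) simp
  ultimately show ?thesis
    using sum_cheb_weight_ln_double_weight[OF assms(1,2)] assms(1)
    by (simp add: w_def field_simps)
qed

theorem proposition1:
  fixes s k :: nat and \<theta> x :: real
  assumes "0 < s" and "s < k" and "gcd s k = 1"
    and "\<theta> = pi * real s / real k" and "x = cos \<theta>"
  shows "(even k \<longrightarrow>
            ((\<lambda>n. ln (real n) - entropy_Psi n x) \<longlonglongrightarrow> 1 - ln 2 + R_fun (1 / real k))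
            \<and> 1 - ln 2 + R_fun (1 / real k) > 1 - ln 2)
       \<and> (odd k \<longrightarrow>
            ((\<lambda>n. ln (real n) - entropy_Psi n x) \<longlonglongrightarrow>
               1 - ln 2 + 2 * (R_fun (1 / (2 * real k)) - R_fun (1 / real k) / 2))
            \<and> 1 - ln 2 + 2 * (R_fun (1 / (2 * real k)) - R_fun (1 / real k) / 2) < 1 - ln 2)"
proof -
  have coprime: "coprime s k" and "k \<ge> 2"
    using assms(1-3) by (auto simp: coprime_iff_gcd_eq_1)
  define F where "F = (\<Sum>n. (-1)^(k * Suc n) * inv_second_diff (real (k * Suc n)))"
  have "2 * \<theta> = 2 * pi * real s / real k" using assms(4) by simp
  then have "(\<lambda>n. ln (real n) - entropy_Psi n x) \<longlonglongrightarrow> 1 - ln 2 + F"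
    using ln_minus_entropy_Psi_rational_tendsto[OF assms(1,2) coprime assms(4)]
      cheb_weight_ln_mean[OF \<open>k \<ge> 2\<close> coprime] assms(5)
    by (simp add: F_def)
  moreover have "F = (if even k then R_fun (1 / real k) else 2 * R_fun (1 / (2 * real k)) - R_fun (1 / real k))"
    using signed_inv_second_diff_sums[OF \<open>k \<ge> 2\<close>] by (simp add: F_def sums_iff)
  ultimately show ?thesis
    using R_fun_inverse_pos[OF \<open>k \<ge> 2\<close>] R_fun_alternating_neg[OF \<open>k \<ge> 2\<close>]
    by (auto simp: algebra_simps)
qed

end
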